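(* $\mathcal M=\mathrm{clos}(\mathcal M_0)\cap\mathbb D$.
   Context: $\mathbb D=\{z\in\mathbb C:|z|<1\}$. $\mathcal M=\{\lambda\in\mathbb D:\ \exists (a_k)_{k\ge1},\ a_k\in\{-1,0,1\},\ 1+\sum_{k\ge1}a_k\lambda^k=0\}$. $\mathcal M_0=\{\lambda\in\mathbb D:\ \exists n\ge1,\ a_1,\dots,a_n\in\{-1,0,1\},\ 1+\sum_{k=1}^n a_k\lambda^k=0\}$. *)

theory Defs
  imports "HOL-Analysis.Analysis"
begin

definition unit_disc :: "complex set" where
  "unit_disc = {z. cmod z < 1}"

definition M_set :: "complex set" where
  "M_set = {z \<in> unit_disc. \<exists>a :: nat \<Rightarrow> int.
      (\<forall>k\<ge>1. a k \<in> {-1, 0, 1}) \<and>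
      1 + (\<Sum>k. of_int (a (Suc k)) * z ^ Suc k) = 0}"

definition M0_set :: "complex set" where
  "M0_set = {z \<in> unit_disc. \<exists>n\<ge>1. \<exists>a :: nat \<Rightarrow> int.
      (\<forall>k\<in>{1..n}. a k \<in> {-1, 0, 1}) \<and>
      1 + (\<Sum>k=1..n. of_int (a k) * z ^ k) = 0}"

end

(*
  Write f_a(z) = 1 + sum_{k>=1} a_k z^k. If f_a(z) = 0 with |z| < 1, then f_a is a nonconstant
  (f_a(0) = 1) locally uniform limit of its partial sums, so by Hurwitz's theorem z is a limit
  of zeros of partial sums, i.e. of points of M0. Conversely M0 is contained in M, and M is
  closed in the disc: if f_{c_n}(w_n) = 0 and w_n -> z, compactness of {-1,0,1}^N gives a
  subsequence along which every coefficient is eventually constant, and Tannery's theorem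
  passes to the limit f_a(z) = 0.
*)
theory Submission
  imports Defs "HOL-Complex_Analysis.Complex_Analysis"
begin

definition digit_seqs :: "(nat \<Rightarrow> int) set" where
  "digit_seqs = {a. \<forall>k. a k \<in> {-1, 0, 1}}"

definition digit_series :: "(nat \<Rightarrow> int) \<Rightarrow> complex \<Rightarrow> complex" where
  "digit_series a z = 1 + (\<Sum>k. of_int (a (Suc k)) * z ^ Suc k)"

definition digit_poly :: "(nat \<Rightarrow> int) \<Rightarrow> nat \<Rightarrow> complex \<Rightarrow> complex" where
  "digit_poly a n z = 1 + (\<Sum>k=1..n. of_int (a k) * z ^ k)"

lemma unit_disc_eq_ball: "unit_disc = ball 0 1"
  by (auto simp: unit_disc_def)

lemma norm_of_int_digit_le_one: "a \<in> digit_seqs \<Longrightarrow> norm (of_int (a k) :: complex) \<le> 1"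
  by (auto simp: digit_seqs_def dest: spec[of _ k])

lemma digit_series_at_0 [simp]: "digit_series a 0 = 1"
  by (simp add: digit_series_def)

lemma digit_poly_eq_lessThan:
  "digit_poly a n z = 1 + (\<Sum>k<n. of_int (a (Suc k)) * z ^ Suc k)"
  by (simp add: digit_poly_def sum.atLeast1_atMost_eq)

lemma digit_series_eq_digit_poly:
  assumes "\<And>k. k > n \<Longrightarrow> a k = 0"
  shows "digit_series a z = digit_poly a n z"
proof -
  have "(\<Sum>k. of_int (a (Suc k)) * z ^ Suc k) = (\<Sum>k<n. of_int (a (Suc k)) * z ^ Suc k)"
    by (rule suminf_finite) (auto simp: assms)
  then show ?thesis
    by (simp add: digit_series_def digit_poly_eq_lessThan)
qed

lemma uniform_limit_digit_poly:
  assumes a: "a \<in> digit_seqs" and K: "compact K" "K \<subseteq> ball 0 1"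
  shows "uniform_limit K (digit_poly a) (digit_series a) sequentially"
proof (cases "K = {}")
  case False
  obtain x where x: "x \<in> K" and max: "\<And>y. y \<in> K \<Longrightarrow> norm y \<le> norm x"
    using continuous_attains_sup[OF K(1) False continuous_on_norm_id] by blast
  have "norm x < 1"
    using x K(2) by auto
  have "norm (of_int (a (Suc k)) * y ^ Suc k) \<le> norm x ^ Suc k" if "y \<in> K" for k y
  proof -
    have "norm (of_int (a (Suc k)) :: complex) * norm y ^ Suc k \<le> 1 * norm x ^ Suc k"
      using norm_of_int_digit_le_one[OF a] max[OF that] by (intro mult_mono power_mono) auto
    then show ?thesis
      by (simp add: norm_mult norm_power)
  qed
  moreover have "summable (\<lambda>k. norm x ^ Suc k)"
    using \<open>norm x < 1\<close> by (simp add: summable_geometric)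
  ultimately have "uniform_limit K (\<lambda>n y. \<Sum>k<n. of_int (a (Suc k)) * y ^ Suc k)
      (\<lambda>y. \<Sum>k. of_int (a (Suc k)) * y ^ Suc k) sequentially"
    by (rule Weierstrass_m_test)
  then have "uniform_limit K (\<lambda>n y. 1 + (\<Sum>k<n. of_int (a (Suc k)) * y ^ Suc k))
      (\<lambda>y. 1 + (\<Sum>k. of_int (a (Suc k)) * y ^ Suc k)) sequentially"
    by (intro uniform_limit_add uniform_limit_const)
  then show ?thesis
    unfolding digit_poly_eq_lessThan[abs_def] digit_series_def[abs_def] .
qed simp

lemma holomorphic_digit_poly: "digit_poly a n holomorphic_on S"
  unfolding digit_poly_def by (intro holomorphic_intros)

lemma holomorphic_digit_series:
  assumes "a \<in> digit_seqs"
  shows "digit_series a holomorphic_on ball 0 1"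
proof (rule holomorphic_uniform_sequence[OF open_ball holomorphic_digit_poly])
  fix x :: complex
  assume "x \<in> ball 0 1"
  then obtain d where "d > 0" "cball x d \<subseteq> ball 0 1"
    using open_contains_cball by (metis open_ball)
  then show "\<exists>d>0. cball x d \<subseteq> ball 0 1 \<and>
      uniform_limit (cball x d) (digit_poly a) (digit_series a) sequentially"
    using uniform_limit_digit_poly[OF assms compact_cball] by blast
qed

lemma tendsto_digit_series:
  assumes c: "\<And>n. c n \<in> digit_seqs"
    and coeffs: "\<And>k. eventually (\<lambda>n. c n k = a k) F"
    and w: "(w \<longlongrightarrow> z) F" and z: "norm z < 1" and F: "F \<noteq> bot"
  shows "((\<lambda>n. digit_series (c n) (w n)) \<longlongrightarrow> digit_series a z) F"
proof -
  define \<rho> where "\<rho> = (1 + norm z) / 2"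
  have "0 < \<rho>" "norm z < \<rho>" "\<rho> < 1"
    using z by (simp_all add: \<rho>_def add_pos_nonneg)
  have w_small: "eventually (\<lambda>n. norm (w n) \<le> \<rho>) F"
    using order_tendstoD(2)[OF tendsto_norm[OF w] \<open>norm z < \<rho>\<close>] by (auto elim: eventually_mono)
  have bound: "norm (of_int (c n (Suc k)) * w n ^ Suc k) \<le> \<rho> ^ Suc k"
    if "norm (w n) \<le> \<rho>" for k n
  proof -
    have "norm (of_int (c n (Suc k)) :: complex) * norm (w n) ^ Suc k \<le> 1 * \<rho> ^ Suc k"
      using norm_of_int_digit_le_one[OF c] that by (intro mult_mono power_mono) auto
    then show ?thesis
      by (simp add: norm_mult norm_power)
  qed
  have "eventually (\<lambda>(k, n). norm (of_int (c n (Suc k)) * w n ^ Suc k) \<le> \<rho> ^ Suc k)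
      (at_top \<times>\<^sub>F F)"
    unfolding eventually_prod_filter using w_small bound
    by (intro exI[of _ "\<lambda>_. True"] exI[of _ "\<lambda>n. norm (w n) \<le> \<rho>"]) auto
  moreover have "summable (\<lambda>k. \<rho> ^ Suc k)"
    using \<open>0 < \<rho>\<close> \<open>\<rho> < 1\<close> by (simp add: summable_geometric abs_of_pos)
  moreover have "((\<lambda>n. of_int (c n (Suc k)) * w n ^ Suc k) \<longlongrightarrow> of_int (a (Suc k)) * z ^ Suc k) F"
    for k
  proof (rule Lim_transform_eventually)
    show "((\<lambda>n. of_int (a (Suc k)) * w n ^ Suc k) \<longlongrightarrow> of_int (a (Suc k)) * z ^ Suc k) F"
      by (intro tendsto_intros w)
    show "eventually (\<lambda>n. of_int (a (Suc k)) * w n ^ Suc k = of_int (c n (Suc k)) * w n ^ Suc k) F"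
      using coeffs[of "Suc k"] by eventually_elim simp
  qed
  ultimately have "((\<lambda>n. \<Sum>k. of_int (c n (Suc k)) * w n ^ Suc k)
      \<longlongrightarrow> (\<Sum>k. of_int (a (Suc k)) * z ^ Suc k)) F"
    using tannerys_theorem[where a = "\<lambda>k n. of_int (c n (Suc k)) * w n ^ Suc k"
        and b = "\<lambda>k. of_int (a (Suc k)) * z ^ Suc k" and M = "\<lambda>k. \<rho> ^ Suc k", OF _ _ _ F]
    by simp
  then show ?thesis
    unfolding digit_series_def by (intro tendsto_add tendsto_const)
qed

lemma compact_ternary_real_seqs: "compact (UNIV \<rightarrow>\<^sub>E {-1, 0, 1 :: real})"
proof -
  have "compactin (product_topology (\<lambda>_. euclidean) UNIV) (UNIV \<rightarrow>\<^sub>E {-1, 0, 1 :: real})"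
    by (simp add: compactin_PiE finite_imp_compact)
  then show ?thesis
    by (simp add: euclidean_product_topology)
qed

lemma digit_seqs_pointwise_convergent_subseq:
  fixes c :: "nat \<Rightarrow> nat \<Rightarrow> int"
  assumes c: "\<And>n. c n \<in> digit_seqs"
  obtains r a where "strict_mono r" "a \<in> digit_seqs"
    "\<And>k. eventually (\<lambda>n. c (r n) k = a k) sequentially"
proof -
  \<comment> \<open>\<open>int\<close> carries no topology, so compactness is used for the real images of the coefficients\<close>
  have "\<forall>n. (\<lambda>k. real_of_int (c n k)) \<in> UNIV \<rightarrow>\<^sub>E {-1, 0, 1}"
    using c by (force simp: digit_seqs_def)
  then obtain b r where b: "b \<in> UNIV \<rightarrow>\<^sub>E {-1, 0, 1}" and r: "strict_mono r"
    and lim: "((\<lambda>n k. real_of_int (c n k)) \<circ> r) \<longlonglongrightarrow> b"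
    by (rule seq_compactE[OF compact_imp_seq_compact[OF compact_ternary_real_seqs]])
  define a where "a k = \<lfloor>b k\<rfloor>" for k
  have b_digit: "b k \<in> {-1, 0, 1}" for k
    using b by (auto simp: PiE_iff)
  have b_int: "b k = real_of_int (a k)" for k
    using b_digit[of k] by (auto simp: a_def)
  have "a k \<in> {-1, 0, 1}" for k
    using b_digit[of k] unfolding b_int by auto
  then have "a \<in> digit_seqs"
    by (simp add: digit_seqs_def)
  moreover have "eventually (\<lambda>n. c (r n) k = a k) sequentially" for k
  proof -
    have "(\<lambda>n. real_of_int (c (r n) k)) \<longlonglongrightarrow> real_of_int (a k)"
      using continuous_on_tendsto_compose[OF continuous_on_product_coordinates lim] b_int
      by (simp add: o_def)
    then have "eventually (\<lambda>n. dist (real_of_int (c (r n) k)) (real_of_int (a k)) < 1) sequentially"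
      by (rule tendstoD) simp
    then show ?thesis
      by eventually_elim (simp add: dist_real_def flip: of_int_diff)
  qed
  ultimately show ?thesis
    using that r by blast
qed

lemma Hurwitz_zero_in_closure_of_zeros:
  fixes F :: "nat \<Rightarrow> complex \<Rightarrow> complex"
  assumes S: "open S" "connected S"
    and holF: "\<And>n. F n holomorphic_on S" and holf: "f holomorphic_on S"
    and lim: "\<And>K. compact K \<Longrightarrow> K \<subseteq> S \<Longrightarrow> uniform_limit K F f sequentially"
    and nonconst: "\<not> f constant_on S" and z: "z \<in> S" "f z = 0"
  shows "z \<in> closure {w \<in> S. \<exists>n. F n w = 0}"
proof (rule ccontr)
  assume "z \<notin> closure {w \<in> S. \<exists>n. F n w = 0}"
  then obtain e where "e > 0" and far: "\<And>n w. w \<in> S \<Longrightarrow> F n w = 0 \<Longrightarrow> e \<le> dist w z"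
    unfolding closure_approachable by (auto simp: not_less)
  obtain d where "d > 0" "ball z d \<subseteq> S"
    using open_contains_ball S(1) z(1) by blast
  define r where "r = min d e"
  have r: "r > 0" "ball z r \<subseteq> S"
    using \<open>d > 0\<close> \<open>e > 0\<close> \<open>ball z d \<subseteq> S\<close> by (auto simp: r_def)
  have "\<not> f constant_on ball z r"
  proof
    assume "f constant_on ball z r"
    then have "\<And>w. w \<in> ball z r \<Longrightarrow> f w = 0"
      using z(2) r(1) by (auto simp: constant_on_def)
    then have "\<And>w. w \<in> S \<Longrightarrow> f w = 0"
      using analytic_continuation[OF holf S r(2) z(1)] r(1) by (simp add: islimpt_ball)
    then show False
      using nonconst by (auto simp: constant_on_def)
  qed
  moreover have "F n w \<noteq> 0" if "w \<in> ball z r" for n w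
    using far[of w n] that r(2) by (force simp: r_def dist_commute)
  moreover have "uniform_limit K F f sequentially" if "compact K" "K \<subseteq> ball z r" for K
    using lim that r(2) by blast
  ultimately have "f z \<noteq> 0"
    using r holomorphic_on_subset[OF holF] holomorphic_on_subset[OF holf]
    by (intro Hurwitz_no_zeros[of "ball z r" F f]) auto
  then show False
    using z(2) by simp
qed

lemma M_set_eq: "M_set = {z \<in> ball 0 1. \<exists>a\<in>digit_seqs. digit_series a z = 0}"
proof (intro equalityI subsetI)
  fix z
  assume "z \<in> M_set"
  then obtain a where z: "z \<in> ball 0 1" and a: "\<forall>k\<ge>1. a k \<in> {-1, 0, 1}"
    and zero: "digit_series a z = 0"
    by (auto simp: M_set_def unit_disc_eq_ball digit_series_def)
  have "a(0 := 0) \<in> digit_seqs"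
    using a by (auto simp: digit_seqs_def)
  moreover have "digit_series (a(0 := 0)) z = 0"
    using zero by (simp add: digit_series_def)
  ultimately show "z \<in> {z \<in> ball 0 1. \<exists>a\<in>digit_seqs. digit_series a z = 0}"
    using z by blast
qed (auto simp: M_set_def unit_disc_eq_ball digit_series_def digit_seqs_def)

lemma M0_set_subset_M_set: "M0_set \<subseteq> M_set"
proof
  fix w
  assume "w \<in> M0_set"
  then obtain n a where w: "w \<in> ball 0 1" and a: "\<forall>k\<in>{1..n}. a k \<in> {-1, 0, 1}"
    and zero: "digit_poly a n w = 0"
    by (auto simp: M0_set_def unit_disc_eq_ball digit_poly_def)
  define a' where "a' k = (if k \<in> {1..n} then a k else 0)" for k
  have "a' \<in> digit_seqs"
    using a by (auto simp: a'_def digit_seqs_def)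
  moreover have "digit_series a' w = digit_poly a' n w"
    by (rule digit_series_eq_digit_poly) (simp add: a'_def)
  moreover have "digit_poly a' n w = digit_poly a n w"
    unfolding digit_poly_def by (intro arg_cong2[where f = "(+)"] sum.cong) (auto simp: a'_def)
  ultimately show "w \<in> M_set"
    using w zero by (auto simp: M_set_eq)
qed

lemma M_set_subset_closure_M0_set: "M_set \<subseteq> closure M0_set"
proof
  fix z
  assume "z \<in> M_set"
  then obtain a where z: "z \<in> ball 0 1" and a: "a \<in> digit_seqs" and zero: "digit_series a z = 0"
    by (auto simp: M_set_eq)
  have nonconst: "\<not> digit_series a constant_on ball 0 1"
  proof
    assume "digit_series a constant_on ball 0 1"
    then obtain y where "\<forall>x\<in>ball 0 1. digit_series a x = y"
      unfolding constant_on_def by blast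
    then have "digit_series a z = digit_series a 0"
      using z by (metis centre_in_ball zero_less_one)
    then show False
      using zero by simp
  qed
  have "z \<in> closure {w \<in> ball 0 1. \<exists>n. digit_poly a n w = 0}"
    by (rule Hurwitz_zero_in_closure_of_zeros[OF open_ball connected_ball holomorphic_digit_poly
          holomorphic_digit_series[OF a] uniform_limit_digit_poly[OF a] nonconst z zero])
  moreover have "{w \<in> ball 0 1. \<exists>n. digit_poly a n w = 0} \<subseteq> M0_set"
  proof clarify
    fix w n
    assume "w \<in> ball 0 1" "digit_poly a n w = 0"
    moreover from this have "n \<ge> 1"
      by (cases n) (auto simp: digit_poly_def)
    ultimately show "w \<in> M0_set"
      using a by (auto simp: M0_set_def unit_disc_eq_ball digit_poly_def digit_seqs_def)
  qed
  ultimately show "z \<in> closure M0_set"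
    using closure_mono by blast
qed

lemma M_set_relatively_closed: "closure M_set \<inter> ball 0 1 \<subseteq> M_set"
proof
  fix z
  assume "z \<in> closure M_set \<inter> ball 0 1"
  then have "z \<in> closure M_set" and z: "norm z < 1"
    by auto
  then obtain w where "\<forall>n. w n \<in> M_set" and w: "w \<longlonglongrightarrow> z"
    unfolding closure_sequential by blast
  then have "\<forall>n. \<exists>c. c \<in> digit_seqs \<and> digit_series c (w n) = 0"
    by (auto simp: M_set_eq)
  then obtain c where c: "\<And>n. c n \<in> digit_seqs" "\<And>n. digit_series (c n) (w n) = 0"
    by (metis choice)
  obtain r a where r: "strict_mono r" and a: "a \<in> digit_seqs"
    and coeffs: "\<And>k. eventually (\<lambda>n. c (r n) k = a k) sequentially"
    by (fact digit_seqs_pointwise_convergent_subseq[of c, OF c(1)])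
  have "(\<lambda>n. w (r n)) \<longlonglongrightarrow> z"
    using LIMSEQ_subseq_LIMSEQ[OF w r] by (simp add: o_def)
  then have "(\<lambda>n. digit_series (c (r n)) (w (r n))) \<longlonglongrightarrow> digit_series a z"
    by (rule tendsto_digit_series[OF c(1) coeffs _ z trivial_limit_sequentially])
  then have "digit_series a z = 0"
    by (simp add: c(2) LIMSEQ_const_iff)
  then show "z \<in> M_set"
    using a z by (auto simp: M_set_eq)
qed

theorem mainTheorem6:
  shows "M_set = closure M0_set \<inter> unit_disc"
proof
  show "M_set \<subseteq> closure M0_set \<inter> unit_disc"
    using M_set_subset_closure_M0_set by (auto simp: M_set_def)
  have "closure M0_set \<subseteq> closure M_set"
    by (rule closure_mono[OF M0_set_subset_M_set])
  then show "closure M0_set \<inter> unit_disc \<subseteq> M_set"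
    using M_set_relatively_closed by (auto simp: unit_disc_eq_ball)
qed

end
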